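(* Let $n\ge2$, $m\ge1$, $0<\alpha_1\le\dots\le\alpha_m$ with $\sum\alpha_j=1$, and let $(A,\tau)=(\mathbb{C}p_1\oplus\cdots\oplus\mathbb{C}p_m,\tau_1)*(\mathbb{M}_n,tr_n)$ be the reduced free product ($\tau_1(p_j)=\alpha_j$). Let $\{e_{ij}\}$ be matrix units of $\mathbb{M}_n\subset A$ and $u=\sum_{i=1}^{n-1}e_{i,i+1}+e_{n,1}$. Let $l$ be an integer with $l\mid n$, $1<l<n$ (for part (ii)). Then: (i) The family consisting of the $n+1$ subalgebras $C^*(u^kp_1u^{-k},\dots,u^kp_mu^{-k})$, $k=0,\dots,n-1$, and $C^*(e_{11},\dots,e_{nn})$ is free in $(A,\tau)$. More generally, if $\omega\in\Lambda^\circ\big(C^*(p_1,\dots,p_m)^\circ,\dots,C^*(u^{n-1}p_1u^{1-n},\dots,u^{n-1}p_mu^{1-n})^\circ,C^*(e_{11},\dots,e_{nn})^\circ\big)$, then $\tau(\omega u^r)=0$ for all $0\le r\le n-1$. (ii) The family consisting of the $l+1$ subalgebras $C^*(u^kp_1u^{-k},\dots,u^kp_mu^{-k})$, $k=0,\dots,l-1$, and $C^*(e_{11},\dots,e_{nn},u^l,u^{2l},\dots,u^{n-l})$ is free in $(A,\tau)$. More generally, if $\omega\in\Lambda^\circ\big(C^*(p_1,\dots,p_m)^\circ,\dots,C^*(u^{l-1}p_1u^{1-l},\dots,u^{l-1}p_mu^{1-l})^\circ,C^*(e_{11},\dots,e_{nn},u^l,\dots,u^{n-l})^\circ\big)$,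 then $\tau(\omega u^r)=0$ for all $0\le r\le l-1$.
   Context: Reduced free product: the unique unital $C^*$-algebra with state generated by unital copies of the factors, restricting to the given traces, in which they are free, with faithful GNS representation; here $\tau$ is a faithful trace. A family of unital $C^*$-subalgebras $D_i$ is free in $(A,\tau)$ if $\tau(d_1\cdots d_r)=0$ whenever $d_s\in D_{i_s}$, $i_1\ne i_2\ne\dots\ne i_r$, and $\tau(d_s)=0$ for all $s$. For a unital subalgebra $D$, $D^\circ=\{d\in D:\tau(d)=0\}$. For unital subalgebras $D_1,\dots,D_k$, $\Lambda^\circ(D_1^\circ,\dots,D_k^\circ)$ is the set of all products $d_1d_2\cdots d_j$ of nonzero length with $d_t\in D_{i_t}^\circ$ and $i_t\ne i_{t+1}$ for $1\le t\le j-1$. *)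

theory Defs
  imports "HOL-Analysis.Analysis"
begin

text \<open>Unital complex C*-algebras, given abstractly on a real unital Banach algebra
  'a by a complex scalar multiplication sc and an involution st.\<close>

definition cstar_algebra :: "(complex \<Rightarrow> 'a::{real_normed_algebra_1,banach} \<Rightarrow> 'a) \<Rightarrow> ('a \<Rightarrow> 'a) \<Rightarrow> bool" where
  "cstar_algebra sc st \<longleftrightarrow>
     (\<forall>(r::real) x::'a. sc (complex_of_real r) x = scaleR r x) \<and>
     (\<forall>a b x. sc (a + b) x = sc a x + sc b x) \<and>
     (\<forall>a x y. sc a (x + y) = sc a x + sc a y) \<and>
     (\<forall>a b x. sc (a * b) x = sc a (sc b x)) \<and>
     (\<forall>a x y. sc a (x * y) = sc a x * y) \<and>
     (\<forall>a x y. sc a (x * y) = x * sc a y) \<and>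
     (\<forall>a x. norm (sc a x) = cmod a * norm x) \<and>
     (\<forall>x y. st (x + y) = st x + st y) \<and>
     (\<forall>x y. st (x * y) = st y * st x) \<and>
     (\<forall>a x. st (sc a x) = sc (cnj a) (st x)) \<and>
     (\<forall>x. st (st x) = x) \<and>
     (\<forall>x. norm (st x * x) = (norm x)\<^sup>2)"

definition faithful_tracial_state ::
  "(complex \<Rightarrow> 'a \<Rightarrow> 'a) \<Rightarrow> ('a \<Rightarrow> 'a) \<Rightarrow> ('a::ring_1 \<Rightarrow> complex) \<Rightarrow> bool" where
  "faithful_tracial_state sc st \<tau> \<longleftrightarrow>
     (\<forall>x y. \<tau> (x + y) = \<tau> x + \<tau> y) \<and>
     (\<forall>a x. \<tau> (sc a x) = a * \<tau> x) \<and>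
     \<tau> 1 = 1 \<and>
     (\<forall>x. Im (\<tau> (st x * x)) = 0 \<and> Re (\<tau> (st x * x)) \<ge> 0) \<and>
     (\<forall>x. \<tau> (st x * x) = 0 \<longrightarrow> x = 0) \<and>
     (\<forall>x y. \<tau> (x * y) = \<tau> (y * x))"

definition cstar_gen ::
  "(complex \<Rightarrow> 'a \<Rightarrow> 'a) \<Rightarrow> ('a \<Rightarrow> 'a) \<Rightarrow> 'a::real_normed_algebra_1 set \<Rightarrow> 'a set" where
  "cstar_gen sc st S = \<Inter>{B. S \<subseteq> B \<and> 1 \<in> B \<and> closed B \<and>
       (\<forall>x\<in>B. \<forall>y\<in>B. x + y \<in> B \<and> x * y \<in> B) \<and>
       (\<forall>a. \<forall>x\<in>B. sc a x \<in> B) \<and> (\<forall>x\<in>B. st x \<in> B)}"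

definition free_family :: "('a::monoid_mult \<Rightarrow> complex) \<Rightarrow> 'i set \<Rightarrow> ('i \<Rightarrow> 'a set) \<Rightarrow> bool" where
  "free_family \<tau> I D \<longleftrightarrow>
     (\<forall>(r::nat) (idx::nat \<Rightarrow> 'i) (d::nat \<Rightarrow> 'a).
        r \<ge> 1 \<and> (\<forall>s<r. idx s \<in> I \<and> d s \<in> D (idx s) \<and> \<tau> (d s) = 0) \<and>
        (\<forall>s. s + 1 < r \<longrightarrow> idx s \<noteq> idx (s + 1))
        \<longrightarrow> \<tau> (prod_list (map d [0..<r])) = 0)"

definition Lambda0 :: "('a::monoid_mult \<Rightarrow> complex) \<Rightarrow> 'i set \<Rightarrow> ('i \<Rightarrow> 'a set) \<Rightarrow> 'a set" where
  "Lambda0 \<tau> I D = {prod_list (map d [0..<r]) | r (idx::nat \<Rightarrow> 'i) d.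
        r \<ge> 1 \<and> (\<forall>s<r. idx s \<in> I \<and> d s \<in> D (idx s) \<and> \<tau> (d s) = 0) \<and>
        (\<forall>s. s + 1 < r \<longrightarrow> idx s \<noteq> idx (s + 1))}"

end

theory Submission
  imports Defs
begin

text \<open>Write P = C*(p_1, ..., p_m) and M = M_n, which are free, and let W = diag(z, z^2, ..., z^n)
  with z = exp(2 pi i / l), so that u W = z W u. The algebra D of the last index commutes with W
  (for l = n it is diagonal; for l dividing n it also contains the powers u^(l t)); hence for
  d in D and 0 < j < l conjugation by W gives \<tau>(d u^j) = z^j \<tau>(d u^j), so \<tau>(d u^j) = 0.
  Writing each letter of u^k P u^-k as u^k x u^-k with x in P centred, an alternating word w in
  the given algebras becomes, after a cyclic rotation under the trace, a word
  x_1 y_1 x_2 ... y_(q-1) x_q Y in which the y_i = u^-k d u^k' (d in D centred, or d = 1 and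
  k <> k') are centred elements of M, and Y lies in M. Freeness of P and M then gives
  \<tau>(w u^r) = 0; freeness of the family is the case r = 0.\<close>

section \<open>Generated C*-subalgebras\<close>

definition cstar_closed :: "(complex \<Rightarrow> 'a \<Rightarrow> 'a) \<Rightarrow> ('a \<Rightarrow> 'a) \<Rightarrow> 'a::real_normed_algebra_1 set \<Rightarrow> bool" where
  "cstar_closed sc st B \<longleftrightarrow> 1 \<in> B \<and> closed B \<and>
     (\<forall>x\<in>B. \<forall>y\<in>B. x + y \<in> B \<and> x * y \<in> B) \<and>
     (\<forall>a. \<forall>x\<in>B. sc a x \<in> B) \<and> (\<forall>x\<in>B. st x \<in> B)"

lemma cstar_gen_eq_Inter: "cstar_gen sc st S = \<Inter>{B. S \<subseteq> B \<and> cstar_closed sc st B}"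
  unfolding cstar_gen_def cstar_closed_def by (rule arg_cong[where f = Inter]) blast

lemma cstar_gen_superset: "S \<subseteq> cstar_gen sc st S"
  unfolding cstar_gen_eq_Inter by blast

lemma cstar_gen_least: "S \<subseteq> B \<Longrightarrow> cstar_closed sc st B \<Longrightarrow> cstar_gen sc st S \<subseteq> B"
  unfolding cstar_gen_eq_Inter by blast

lemma cstar_closed_cstar_gen: "cstar_closed sc st (cstar_gen sc st S)"
  unfolding cstar_gen_eq_Inter by (auto intro!: closed_Inter simp: cstar_closed_def)

lemma cstar_closed_Int: "cstar_closed sc st A \<Longrightarrow> cstar_closed sc st B \<Longrightarrow> cstar_closed sc st (A \<inter> B)"
  unfolding cstar_closed_def by auto

lemma cstar_gen_one: "1 \<in> cstar_gen sc st S"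
  and cstar_gen_add: "x \<in> cstar_gen sc st S \<Longrightarrow> y \<in> cstar_gen sc st S \<Longrightarrow> x + y \<in> cstar_gen sc st S"
  and cstar_gen_mult: "x \<in> cstar_gen sc st S \<Longrightarrow> y \<in> cstar_gen sc st S \<Longrightarrow> x * y \<in> cstar_gen sc st S"
  and cstar_gen_scale: "x \<in> cstar_gen sc st S \<Longrightarrow> sc a x \<in> cstar_gen sc st S"
  and cstar_gen_star: "x \<in> cstar_gen sc st S \<Longrightarrow> st x \<in> cstar_gen sc st S"
  using cstar_closed_cstar_gen[of sc st S] unfolding cstar_closed_def by blast+

lemma cstar_gen_power: "x \<in> cstar_gen sc st S \<Longrightarrow> x ^ k \<in> cstar_gen sc st S"
  by (induction k) (auto intro: cstar_gen_one cstar_gen_mult)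

section \<open>Unitaries and commutants in the abstract C*-algebra\<close>

definition commutant :: "'a::times \<Rightarrow> 'a set" where
  "commutant w = {x. x * w = w * x}"

locale cstar_alg =
  fixes sc :: "complex \<Rightarrow> 'a::{real_normed_algebra_1,banach} \<Rightarrow> 'a"
    and st :: "'a \<Rightarrow> 'a"
  assumes cstar: "cstar_algebra sc st"
begin

lemma scale_of_real: "sc (complex_of_real r) x = scaleR r x"
  and scale_add_left: "sc (a + b) x = sc a x + sc b x"
  and scale_add_right: "sc a (x + y) = sc a x + sc a y"
  and scale_scale: "sc a (sc b x) = sc (a * b) x"
  and scale_mult_left: "sc a x * y = sc a (x * y)"
  and scale_mult_right: "x * sc a y = sc a (x * y)"
  and star_add: "st (x + y) = st x + st y"
  and star_mult: "st (x * y) = st y * st x"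
  and star_scale: "st (sc a x) = sc (cnj a) (st x)"
  and star_star [simp]: "st (st x) = x"
  using cstar unfolding cstar_algebra_def by metis+

lemma scale_zero_left [simp]: "sc 0 x = 0"
  using scale_of_real[of 0 x] by simp

lemma scale_one [simp]: "sc 1 x = x"
  using scale_of_real[of 1 x] by simp

lemma scale_zero_right [simp]: "sc a 0 = 0"
  using scale_add_right[of a 0 0] by simp

lemma scale_sum_right: "sc a (sum f A) = (\<Sum>i\<in>A. sc a (f i))"
  by (induction A rule: infinite_finite_induct) (auto simp: scale_add_right)

lemma scale_sum_left: "sc (sum f A) x = (\<Sum>i\<in>A. sc (f i) x)"
  by (induction A rule: infinite_finite_induct) (auto simp: scale_add_left)

lemma scale_mult_scale: "sc a x * sc b y = sc (a * b) (x * y)"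
  by (simp add: scale_mult_left scale_mult_right scale_scale mult.commute)

lemma star_zero [simp]: "st 0 = 0"
  using star_add[of 0 0] by simp

lemma star_one [simp]: "st 1 = 1"
  using star_mult[of "st 1" 1] by simp

lemma star_sum: "st (sum f A) = (\<Sum>i\<in>A. st (f i))"
  by (induction A rule: infinite_finite_induct) (auto simp: star_add)

lemma star_power: "st (x ^ k) = st x ^ k"
  by (induction k) (auto simp: star_mult power_commutes)

lemma cstar_gen_zero: "0 \<in> cstar_gen sc st S"
proof -
  have "sc 0 1 \<in> cstar_gen sc st S" by (rule cstar_gen_scale[OF cstar_gen_one])
  then show ?thesis by simp
qed

lemma cstar_gen_sum: "(\<And>i. i \<in> A \<Longrightarrow> f i \<in> cstar_gen sc st S) \<Longrightarrow> sum f A \<in> cstar_gen sc st S"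
  by (induction A rule: infinite_finite_induct) (auto intro: cstar_gen_add cstar_gen_zero)

lemma twisted_commute_power:
  assumes "v * w = sc c (w * v)"
  shows "v ^ j * w = sc (c ^ j) (w * v ^ j)"
proof (induction j)
  case (Suc j)
  have "v ^ Suc j * w = v * (v ^ j * w)" by (simp add: mult.assoc)
  also have "\<dots> = sc (c ^ j) ((v * w) * v ^ j)" by (simp add: Suc scale_mult_right mult.assoc)
  also have "\<dots> = sc (c ^ Suc j) (w * v ^ Suc j)"
    by (simp add: assms scale_mult_left scale_scale mult.assoc mult.commute)
  finally show ?case .
qed simp

definition unitary :: "'a \<Rightarrow> bool" where
  "unitary w \<longleftrightarrow> st w * w = 1 \<and> w * st w = 1"

lemma unitary_power: "unitary w \<Longrightarrow> unitary (w ^ k)"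
proof (induction k)
  case (Suc k)
  have "st (w ^ Suc k) * w ^ Suc k = st w * (st (w ^ k) * w ^ k) * w"
    by (simp only: power_Suc2 star_mult mult.assoc)
  moreover have "w ^ Suc k * st (w ^ Suc k) = w * (w ^ k * st (w ^ k)) * st w"
    by (simp only: power_Suc star_mult mult.assoc)
  ultimately show ?case using Suc by (simp add: unitary_def)
qed (simp add: unitary_def)

lemma cstar_closed_commutant:
  assumes "unitary w"
  shows "cstar_closed sc st (commutant w)"
  unfolding cstar_closed_def
proof (intro conjI ballI allI)
  show "closed (commutant w)"
    unfolding commutant_def by (rule closed_Collect_eq) (intro continuous_intros)+
next
  fix x y assume "x \<in> commutant w" "y \<in> commutant w"
  then show "x + y \<in> commutant w" "x * y \<in> commutant w"
    unfolding commutant_def by (auto simp: distrib_left distrib_right) (metis mult.assoc)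
next
  fix a x assume "x \<in> commutant w"
  then show "sc a x \<in> commutant w"
    unfolding commutant_def by (simp add: scale_mult_left scale_mult_right)
next
  fix x assume "x \<in> commutant w"
  then have xw: "x * w = w * x" by (simp add: commutant_def)
  have "st w * x = st w * x * (w * st w)" using assms by (simp add: unitary_def)
  also have "\<dots> = st w * (x * w) * st w" by (simp only: mult.assoc)
  also have "\<dots> = (st w * w) * x * st w" by (simp only: xw mult.assoc)
  also have "\<dots> = x * st w" using assms by (simp add: unitary_def)
  finally have "st (st w * x) = st (x * st w)" by simp
  then show "st x \<in> commutant w" by (simp add: star_mult commutant_def)
qed (simp add: commutant_def)

lemma cstar_gen_conj:
  assumes v: "unitary v" and x: "x \<in> cstar_gen sc st ((\<lambda>s. v * s * st v) ` S)"
  shows "st v * x * v \<in> cstar_gen sc st S"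
proof -
  let ?C = "cstar_gen sc st S"
  define B where "B = {y. st v * y * v \<in> ?C}"
  have vv: "v * st v = 1" "st v * v = 1" using v by (simp_all add: unitary_def)
  have conj_mult: "st v * (y * z) * v = (st v * y * v) * (st v * z * v)" for y z
  proof -
    have "st v * (y * z) * v = st v * y * (v * st v) * z * v" by (simp add: vv mult.assoc)
    also have "\<dots> = (st v * y * v) * (st v * z * v)" by (simp only: mult.assoc)
    finally show ?thesis .
  qed
  have "cstar_closed sc st B"
    unfolding cstar_closed_def
  proof (intro conjI ballI allI)
    show "1 \<in> B" by (simp add: B_def vv cstar_gen_one)
    have "closed ((\<lambda>y. st v * y * v) -` ?C)"
      using cstar_closed_cstar_gen[of sc st S]
      by (intro continuous_closed_vimage) (auto simp: cstar_closed_def intro!: continuous_intros)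
    then show "closed B" by (simp add: B_def vimage_def)
  next
    fix y z assume "y \<in> B" "z \<in> B"
    then have "st v * y * v \<in> ?C" "st v * z * v \<in> ?C" by (simp_all add: B_def)
    then show "y + z \<in> B" "y * z \<in> B"
      unfolding B_def mem_Collect_eq conj_mult distrib_left distrib_right
      by (auto intro: cstar_gen_add cstar_gen_mult)
  next
    fix a y assume "y \<in> B"
    then show "sc a y \<in> B"
      by (simp add: B_def scale_mult_left scale_mult_right cstar_gen_scale)
  next
    fix y assume "y \<in> B"
    then show "st y \<in> B"
      using cstar_gen_star[of "st v * y * v" sc st S] by (simp add: B_def star_mult mult.assoc)
  qed
  moreover have "(\<lambda>s. v * s * st v) ` S \<subseteq> B"
  proof -
    have "st v * (v * s * st v) * v = (st v * v) * s * (st v * v)" for s by (simp only: mult.assoc)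
    then show ?thesis using cstar_gen_superset[of S sc st] by (auto simp: B_def vv)
  qed
  ultimately have "cstar_gen sc st ((\<lambda>s. v * s * st v) ` S) \<subseteq> B"
    by (rule cstar_gen_least[rotated])
  then show ?thesis using x by (auto simp: B_def)
qed

end

section \<open>Matrix units\<close>

lemma sum_delta_mult:
  fixes x :: complex
  assumes "finite A"
  shows "(\<Sum>j\<in>A. (if j = a then x else 0) * f j) = (if a \<in> A then x * f a else 0)"
proof -
  have "(\<Sum>j\<in>A. (if j = a then x else 0) * f j) = (\<Sum>j\<in>A. if j = a then x * f a else 0)"
    by (rule sum.cong) auto
  then show ?thesis using assms by (simp add: sum.delta)
qed

locale matrix_units = cstar_alg +
  fixes n :: nat and e :: "nat \<Rightarrow> nat \<Rightarrow> 'a"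
  assumes e_mult: "\<forall>i\<in>{1..n}. \<forall>j\<in>{1..n}. \<forall>k\<in>{1..n}. \<forall>l\<in>{1..n}.
                     e i j * e k l = (if j = k then e i l else 0)"
    and e_star: "\<forall>i\<in>{1..n}. \<forall>j\<in>{1..n}. st (e i j) = e j i"
    and e_sum: "(\<Sum>i=1..n. e i i) = 1"
begin

definition matrix_of :: "(nat \<Rightarrow> nat \<Rightarrow> complex) \<Rightarrow> 'a" where
  "matrix_of a = (\<Sum>i\<in>{1..n}. \<Sum>j\<in>{1..n}. sc (a i j) (e i j))"

definition monomial_matrix :: "(nat \<Rightarrow> nat) \<Rightarrow> (nat \<Rightarrow> complex) \<Rightarrow> 'a" where
  "monomial_matrix g c = matrix_of (\<lambda>i j. if j = g i then c i else 0)"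

abbreviation diag :: "(nat \<Rightarrow> complex) \<Rightarrow> 'a" where
  "diag c \<equiv> monomial_matrix (\<lambda>i. i) c"

abbreviation perm_matrix :: "(nat \<Rightarrow> nat) \<Rightarrow> 'a" where
  "perm_matrix g \<equiv> monomial_matrix g (\<lambda>_. 1)"

lemma matrix_of_cong:
  "(\<And>i j. i \<in> {1..n} \<Longrightarrow> j \<in> {1..n} \<Longrightarrow> a i j = b i j) \<Longrightarrow> matrix_of a = matrix_of b"
  unfolding matrix_of_def by (intro sum.cong refl) auto

lemma matrix_of_mult: "matrix_of a * matrix_of b = matrix_of (\<lambda>i k. \<Sum>j\<in>{1..n}. a i j * b j k)"
proof -
  let ?N = "{1..n}"
  have unit_mult: "sc (a i j) (e i j) * sc (b k l) (e k l) = (if k = j then sc (a i j * b k l) (e i l) else 0)"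
    if "i \<in> ?N" "j \<in> ?N" "k \<in> ?N" "l \<in> ?N" for i j k l
    using e_mult that by (auto simp: scale_mult_scale)
  have "matrix_of a * matrix_of b =
      (\<Sum>i\<in>?N. \<Sum>j\<in>?N. \<Sum>k\<in>?N. \<Sum>l\<in>?N. sc (a i j) (e i j) * sc (b k l) (e k l))"
    unfolding matrix_of_def by (simp only: sum_distrib_right, simp only: sum_distrib_left)
  also have "\<dots> = (\<Sum>i\<in>?N. \<Sum>j\<in>?N. \<Sum>k\<in>?N. if k = j then (\<Sum>l\<in>?N. sc (a i j * b k l) (e i l)) else 0)"
    by (intro sum.cong refl) (simp add: unit_mult)
  also have "\<dots> = (\<Sum>i\<in>?N. \<Sum>j\<in>?N. \<Sum>l\<in>?N. sc (a i j * b j l) (e i l))"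
    by (simp add: sum.delta)
  also have "\<dots> = (\<Sum>i\<in>?N. \<Sum>l\<in>?N. \<Sum>j\<in>?N. sc (a i j * b j l) (e i l))"
    by (rule sum.cong[OF refl], rule sum.swap)
  also have "\<dots> = matrix_of (\<lambda>i k. \<Sum>j\<in>?N. a i j * b j k)"
    unfolding matrix_of_def by (simp add: scale_sum_left)
  finally show ?thesis .
qed

lemma matrix_of_star: "st (matrix_of a) = matrix_of (\<lambda>i j. cnj (a j i))"
proof -
  have "st (matrix_of a) = (\<Sum>i\<in>{1..n}. \<Sum>j\<in>{1..n}. sc (cnj (a i j)) (e j i))"
    unfolding matrix_of_def using e_star by (simp add: star_sum star_scale)
  also have "\<dots> = matrix_of (\<lambda>i j. cnj (a j i))"
    unfolding matrix_of_def by (rule sum.swap)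
  finally show ?thesis .
qed

lemma matrix_of_scale: "sc z (matrix_of a) = matrix_of (\<lambda>i j. z * a i j)"
  unfolding matrix_of_def by (simp add: scale_sum_right scale_scale)

lemma monomial_matrix_eq_sum:
  assumes "\<And>i. i \<in> {1..n} \<Longrightarrow> g i \<in> {1..n}"
  shows "monomial_matrix g c = (\<Sum>i\<in>{1..n}. sc (c i) (e i (g i)))"
  unfolding monomial_matrix_def matrix_of_def
proof (intro sum.cong refl)
  fix i assume "i \<in> {1..n}"
  then have "(\<Sum>j\<in>{1..n}. sc (if j = g i then c i else 0) (e i j)) =
      (\<Sum>j\<in>{1..n}. if j = g i then sc (c i) (e i j) else 0)"
    by (intro sum.cong refl) simp
  also have "\<dots> = sc (c i) (e i (g i))" using assms \<open>i \<in> {1..n}\<close> by (simp add: sum.delta')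
  finally show "(\<Sum>j\<in>{1..n}. sc (if j = g i then c i else 0) (e i j)) = sc (c i) (e i (g i))" .
qed

lemma diag_eq_sum: "diag c = (\<Sum>i\<in>{1..n}. sc (c i) (e i i))"
  by (rule monomial_matrix_eq_sum)

lemma diag_one: "diag (\<lambda>_. 1) = 1"
  using e_sum by (simp add: diag_eq_sum)

lemma diag_indicator:
  assumes "k \<in> {1..n}"
  shows "diag (\<lambda>i. if i = k then 1 else 0) = e k k"
proof -
  have "diag (\<lambda>i. if i = k then 1 else 0) = (\<Sum>i\<in>{1..n}. if i = k then e i i else 0)"
    unfolding diag_eq_sum by (intro sum.cong) simp_all
  then show ?thesis using assms by simp
qed

lemma monomial_matrix_mult:
  assumes "\<And>i. i \<in> {1..n} \<Longrightarrow> g i \<in> {1..n}"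
  shows "monomial_matrix g c * monomial_matrix h d = monomial_matrix (\<lambda>i. h (g i)) (\<lambda>i. c i * d (g i))"
  unfolding monomial_matrix_def matrix_of_mult
proof (rule matrix_of_cong)
  fix i k assume "i \<in> {1..n}"
  then show "(\<Sum>j\<in>{1..n}. (if j = g i then c i else 0) * (if k = h j then d j else 0)) =
      (if k = h (g i) then c i * d (g i) else 0)"
    using assms by (simp only: sum_delta_mult[OF finite_atLeastAtMost]) simp
qed

lemma diag_mult: "diag c * monomial_matrix h d = monomial_matrix h (\<lambda>i. c i * d i)"
  by (rule monomial_matrix_mult) simp

lemma diag_star: "st (diag c) = diag (\<lambda>i. cnj (c i))"
  unfolding monomial_matrix_def matrix_of_star by (rule matrix_of_cong) auto

lemma unitary_diag:
  assumes "\<And>i. i \<in> {1..n} \<Longrightarrow> cnj (c i) * c i = 1"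
  shows "unitary (diag c)"
proof -
  have "diag (\<lambda>i. cnj (c i) * c i) = diag (\<lambda>_. 1)" "diag (\<lambda>i. c i * cnj (c i)) = diag (\<lambda>_. 1)"
    using assms unfolding monomial_matrix_def by (auto intro!: matrix_of_cong simp: mult.commute)
  then show ?thesis by (simp add: unitary_def diag_star diag_mult diag_one)
qed

lemma perm_matrix_star: "st (perm_matrix g) = matrix_of (\<lambda>i j. if i = g j then 1 else 0)"
  unfolding monomial_matrix_def matrix_of_star by (rule matrix_of_cong) simp

lemma unitary_perm_matrix:
  assumes g: "bij_betw g {1..n} {1..n}"
  shows "unitary (perm_matrix g)"
proof -
  let ?N = "{1..n}"
  have one: "1 = matrix_of (\<lambda>i j. if i = j then 1 else 0)"
    unfolding diag_one[symmetric] monomial_matrix_def by (rule matrix_of_cong) auto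
  have "st (perm_matrix g) * perm_matrix g = 1"
    unfolding one perm_matrix_star unfolding monomial_matrix_def matrix_of_mult
  proof (rule matrix_of_cong)
    fix i k assume "i \<in> ?N"
    have "(\<Sum>j\<in>?N. (if i = g j then 1 else 0) * (if k = g j then 1 else 0)) =
        (\<Sum>j\<in>?N. (if i = j then 1 else 0) * (if k = j then 1 else (0::complex)))"
      by (rule sum.reindex_bij_betw[OF g, of "\<lambda>j. (if i = j then 1 else 0) * (if k = j then 1 else 0)"])
    also have "\<dots> = (\<Sum>j\<in>?N. (if j = i then 1 else 0) * (if k = j then 1 else 0))"
      by (intro sum.cong) auto
    also have "\<dots> = (if i = k then 1 else 0)"
      using \<open>i \<in> ?N\<close> by (simp only: sum_delta_mult[OF finite_atLeastAtMost]) simp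
    finally show "(\<Sum>j\<in>?N. (if i = g j then 1 else 0) * (if k = g j then 1 else 0)) =
        (if i = k then 1 else (0::complex))" .
  qed
  moreover have "perm_matrix g * st (perm_matrix g) = 1"
    unfolding one perm_matrix_star unfolding monomial_matrix_def matrix_of_mult
  proof (rule matrix_of_cong)
    fix i k assume ik: "i \<in> ?N" "k \<in> ?N"
    have "g i \<in> ?N" using bij_betwE[OF g] ik(1) by blast
    moreover have "g i = g k \<longleftrightarrow> i = k" by (rule inj_on_eq_iff[OF bij_betw_imp_inj_on[OF g] ik])
    ultimately show "(\<Sum>j\<in>?N. (if j = g i then 1 else 0) * (if j = g k then 1 else 0)) =
        (if i = k then 1 else (0::complex))"
      by (simp only: sum_delta_mult[OF finite_atLeastAtMost]) simp
  qed
  ultimately show ?thesis by (simp add: unitary_def)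
qed

lemma perm_matrix_diag_twist:
  assumes "\<And>i. i \<in> {1..n} \<Longrightarrow> g i \<in> {1..n}" and "\<And>i. i \<in> {1..n} \<Longrightarrow> c (g i) = z * c i"
  shows "perm_matrix g * diag c = sc z (diag c * perm_matrix g)"
proof -
  have "perm_matrix g * diag c = monomial_matrix g (\<lambda>i. c (g i))"
    using monomial_matrix_mult[OF assms(1)] by simp
  also have "\<dots> = sc z (monomial_matrix g c)"
    unfolding monomial_matrix_def matrix_of_scale using assms(2) by (intro matrix_of_cong) simp
  also have "monomial_matrix g c = diag c * perm_matrix g"
    by (simp add: diag_mult)
  finally show ?thesis .
qed

end

section \<open>Clock and shift\<close>

lemma cis_2pi_div_power_eq_1_iff:
  assumes "0 < l"
  shows "cis (2 * pi / real l) ^ j = 1 \<longleftrightarrow> l dvd j"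
proof
  assume "l dvd j"
  then obtain q where "j = l * q" ..
  then have j: "real j * (2 * pi / real l) = 2 * pi * real q" using assms by simp
  have "cis (2 * pi / real l) ^ j = cis (real j * (2 * pi / real l))" by (rule Complex.DeMoivre)
  also have "\<dots> = cis (2 * pi * real q)" by (simp only: j)
  also have "\<dots> = 1" by (rule cis_multiple_2pi) simp
  finally show "cis (2 * pi / real l) ^ j = 1" .
next
  assume "cis (2 * pi / real l) ^ j = 1"
  then have "cos (real j * (2 * pi / real l)) = 1"
    by (metis Complex.DeMoivre cis.sel(1) one_complex.sel(1))
  then obtain k :: int where "real j * (2 * pi / real l) = real_of_int k * 2 * pi"
    using cos_one_2pi_int by blast
  then have "real j = real_of_int k * real l" using assms by (simp add: field_simps)
  then have "int j = k * int l" by (metis of_int_eq_iff of_int_mult of_int_of_nat_eq)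
  then show "l dvd j" by (metis dvd_triv_right int_dvd_int_iff)
qed

locale tracial_cstar = cstar_alg +
  fixes \<tau> :: "'a \<Rightarrow> complex"
  assumes state: "faithful_tracial_state sc st \<tau>"
begin

lemma trace_add: "\<tau> (x + y) = \<tau> x + \<tau> y"
  and trace_scale: "\<tau> (sc a x) = a * \<tau> x"
  and trace_one: "\<tau> 1 = 1"
  and trace_commute: "\<tau> (x * y) = \<tau> (y * x)"
  using state unfolding faithful_tracial_state_def by metis+

lemma trace_conj_unitary:
  assumes "unitary v"
  shows "\<tau> (st v * x * v) = \<tau> x"
proof -
  have "\<tau> (st v * x * v) = \<tau> (x * v * st v)" by (simp add: trace_commute[of "st v"] mult.assoc)
  then show ?thesis using assms by (simp add: unitary_def mult.assoc)
qed

text \<open>Conjugation by w multiplies d v^j by c^j without changing its trace.\<close>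

lemma trace_twisted_power_eq_0:
  assumes w: "unitary w" and vw: "v * w = sc c (w * v)" and d: "d \<in> commutant w"
    and c: "c ^ j \<noteq> 1"
  shows "\<tau> (d * v ^ j) = 0"
proof -
  have dw: "d * w = w * d" using d by (simp add: commutant_def)
  have "d * v ^ j = d * (v ^ j * w) * st w"
    using w by (simp add: unitary_def mult.assoc)
  also have "\<dots> = sc (c ^ j) ((d * w) * v ^ j * st w)"
    by (simp add: twisted_commute_power[OF vw] scale_mult_left scale_mult_right mult.assoc)
  also have "\<dots> = sc (c ^ j) (w * (d * v ^ j) * st w)"
    by (simp add: dw mult.assoc)
  finally have "d * v ^ j = sc (c ^ j) (w * (d * v ^ j) * st w)" .
  then have "\<tau> (d * v ^ j) = \<tau> (sc (c ^ j) (w * (d * v ^ j) * st w))"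
    by (rule arg_cong)
  also have "\<dots> = c ^ j * \<tau> (w * (d * v ^ j) * st w)"
    by (rule trace_scale)
  also have "\<tau> (w * (d * v ^ j) * st w) = \<tau> (d * v ^ j * (st w * w))"
    by (simp add: trace_commute[of w] mult.assoc)
  finally have "\<tau> (d * v ^ j) = c ^ j * \<tau> (d * v ^ j)"
    using w by (simp add: unitary_def)
  then show ?thesis using c by (metis mult_cancel_right1)
qed

end

locale cyclic_shift = matrix_units sc st n e + tracial_cstar sc st \<tau>
  for sc :: "complex \<Rightarrow> 'a::{real_normed_algebra_1,banach} \<Rightarrow> 'a" and st n e \<tau> +
  fixes u :: 'a
  assumes n_pos: "1 \<le> n"
    and u_def: "u = (\<Sum>i=1..n-1. e i (i+1)) + e n 1"
begin

definition cyc :: "nat \<Rightarrow> nat" where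
  "cyc i = (if i < n then i + 1 else 1)"

definition clock :: "complex \<Rightarrow> 'a" where
  "clock z = diag (\<lambda>i. z ^ i)"

lemma cyc_in: "i \<in> {1..n} \<Longrightarrow> cyc i \<in> {1..n}"
  using n_pos by (auto simp: cyc_def)

lemma bij_cyc: "bij_betw cyc {1..n} {1..n}"
proof -
  have "inj_on cyc {1..n}" by (auto simp: inj_on_def cyc_def split: if_splits)
  moreover have "cyc ` {1..n} = {1..n}" using calculation cyc_in by (intro endo_inj_surj) auto
  ultimately show ?thesis by (simp add: bij_betw_def)
qed

lemma shift_eq_perm_matrix: "u = perm_matrix cyc"
proof -
  obtain k where k: "n = Suc k" using n_pos by (cases n) auto
  have "perm_matrix cyc = (\<Sum>i\<in>{1..n}. e i (cyc i))"
    using monomial_matrix_eq_sum[of cyc "\<lambda>_. 1", OF cyc_in] by simp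
  also have "\<dots> = (\<Sum>i=1..n-1. e i (cyc i)) + e n (cyc n)"
    unfolding k by (simp add: sum.cl_ivl_Suc)
  also have "\<dots> = u" unfolding u_def cyc_def by (auto intro!: sum.cong)
  finally show ?thesis by simp
qed

lemma unitary_shift: "unitary u"
  unfolding shift_eq_perm_matrix by (rule unitary_perm_matrix[OF bij_cyc])

lemma unitary_clock: "cnj z * z = 1 \<Longrightarrow> unitary (clock z)"
  unfolding clock_def by (rule unitary_diag) (metis complex_cnj_power power_mult_distrib power_one)

lemma diag_unit_in_commutant: "k \<in> {1..n} \<Longrightarrow> e k k \<in> commutant (clock z)"
  unfolding commutant_def clock_def diag_indicator[symmetric] by (simp add: diag_mult mult.commute)

lemma shift_clock_twist: "z ^ n = 1 \<Longrightarrow> u * clock z = sc z (clock z * u)"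
  unfolding shift_eq_perm_matrix clock_def
  by (rule perm_matrix_diag_twist) (auto simp: cyc_in cyc_def)

lemma star_shift_clock_twist:
  assumes z: "cnj z * z = 1" "z ^ n = 1"
  shows "st u * clock z = sc (cnj z) (clock z * st u)"
proof -
  let ?w = "clock z"
  have w: "st ?w * ?w = 1" "?w * st ?w = 1" using unitary_clock[OF z(1)] by (simp_all add: unitary_def)
  have twist: "st ?w * st u = sc (cnj z) (st u * st ?w)"
    using arg_cong[OF shift_clock_twist[OF z(2)], of st] by (simp add: star_mult star_scale)
  have "st u * ?w = ?w * (st ?w * st u) * ?w" by (simp add: w flip: mult.assoc)
  also have "\<dots> = sc (cnj z) (?w * st u * (st ?w * ?w))"
    by (simp add: twist scale_mult_left scale_mult_right mult.assoc)
  finally show ?thesis by (simp add: w)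
qed

lemma trace_commutant_clock_shift:
  assumes z: "cnj z * z = 1" "z ^ n = 1" and d: "d \<in> commutant (clock z)" and j: "z ^ j \<noteq> 1"
  shows "\<tau> (d * u ^ j) = 0" and "\<tau> (d * st u ^ j) = 0"
proof -
  show "\<tau> (d * u ^ j) = 0"
    using unitary_clock[OF z(1)] shift_clock_twist[OF z(2)] d j by (rule trace_twisted_power_eq_0)
  have "cnj z ^ j \<noteq> 1" using j by (metis complex_cnj_cnj complex_cnj_one complex_cnj_power)
  then show "\<tau> (d * st u ^ j) = 0"
    using unitary_clock[OF z(1)] star_shift_clock_twist[OF z] d by (intro trace_twisted_power_eq_0)
qed

lemma root_of_unity_clock:
  assumes "l dvd n"
  shows "0 < l" and "cnj (cis (2 * pi / l)) * cis (2 * pi / l) = 1" and "cis (2 * pi / l) ^ n = 1"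
proof -
  show l: "0 < l" using assms n_pos by (auto intro: dvd_pos_nat)
  show "cnj (cis (2 * pi / l)) * cis (2 * pi / l) = 1" by (simp add: cis_cnj cis_mult)
  show "cis (2 * pi / l) ^ n = 1" using assms by (simp add: cis_2pi_div_power_eq_1_iff[OF l])
qed

lemma shift_power_in_commutant:
  assumes "l dvd n" "l dvd j"
  shows "u ^ j \<in> commutant (clock (cis (2 * pi / l)))"
proof -
  note z = root_of_unity_clock[OF assms(1)]
  have "cis (2 * pi / l) ^ j = 1" using assms(2) by (simp add: cis_2pi_div_power_eq_1_iff[OF z(1)])
  then show ?thesis
    using twisted_commute_power[OF shift_clock_twist[OF z(3)], of j] by (simp add: commutant_def)
qed

lemma trace_conj_shift_eq_0:
  assumes l: "l dvd n" and d: "d \<in> commutant (clock (cis (2 * pi / l)))"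
    and k: "k < l" "k' < l" and centred: "k \<noteq> k' \<or> \<tau> d = 0"
  shows "\<tau> (st u ^ k * d * u ^ k') = 0"
proof -
  note z = root_of_unity_clock[OF l]
  have vanish: "\<tau> (d * u ^ j) = 0" "\<tau> (d * st u ^ j) = 0" if "0 < j" "j < l" for j
  proof -
    have "\<not> l dvd j" using that by (auto dest: dvd_imp_le)
    then show "\<tau> (d * u ^ j) = 0" "\<tau> (d * st u ^ j) = 0"
      using trace_commutant_clock_shift[OF z(2,3) d] cis_2pi_div_power_eq_1_iff[OF z(1)] by auto
  qed
  have inv: "u ^ i * st u ^ i = 1" for i
    using unitary_power[OF unitary_shift, of i] by (simp add: unitary_def star_power)
  have "\<tau> (st u ^ k * d * u ^ k') = \<tau> (d * (u ^ k' * st u ^ k))"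
    by (simp add: trace_commute[of "st u ^ k"] mult.assoc)
  also have "\<dots> = 0"
  proof (cases "k \<le> k'")
    case True
    then have "u ^ k' = u ^ (k' - k) * u ^ k" by (simp flip: power_add)
    then have "u ^ k' * st u ^ k = u ^ (k' - k)" by (simp add: inv mult.assoc)
    then show ?thesis using vanish(1)[of "k' - k"] centred k True by (cases "k = k'") auto
  next
    case False
    then have "st u ^ k = st u ^ k' * st u ^ (k - k')" by (simp flip: power_add)
    then have "u ^ k' * st u ^ k = st u ^ (k - k')" by (simp add: inv flip: mult.assoc)
    then show ?thesis using vanish(2)[of "k - k'"] k False by simp
  qed
  finally show ?thesis .
qed

end

section \<open>Free words\<close>

lemma free_family_iff_Lambda0: "free_family \<tau> I D \<longleftrightarrow> (\<forall>\<omega>\<in>Lambda0 \<tau> I D. \<tau> \<omega> = 0)"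
  unfolding free_family_def Lambda0_def by blast

locale free_pair = cyclic_shift sc st n e \<tau> u
  for sc :: "complex \<Rightarrow> 'a::{real_normed_algebra_1,banach} \<Rightarrow> 'a" and st n e \<tau> u +
  fixes m :: nat and p :: "nat \<Rightarrow> 'a"
  assumes free_pe: "free_family \<tau> {0::nat, 1}
                     (\<lambda>i. if i = 0 then cstar_gen sc st (p ` {1..m})
                          else cstar_gen sc st {e i j | i j. i \<in> {1..n} \<and> j \<in> {1..n}})"
begin

definition proj_alg :: "'a set" where
  "proj_alg = cstar_gen sc st (p ` {1..m})"

definition matrix_alg :: "'a set" where
  "matrix_alg = cstar_gen sc st {e i j | i j. i \<in> {1..n} \<and> j \<in> {1..n}}"

lemma unit_in_matrix_alg: "i \<in> {1..n} \<Longrightarrow> j \<in> {1..n} \<Longrightarrow> e i j \<in> matrix_alg"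
  unfolding matrix_alg_def by (rule cstar_gen_superset[THEN subsetD]) blast

lemma matrix_alg_mult: "x \<in> matrix_alg \<Longrightarrow> y \<in> matrix_alg \<Longrightarrow> x * y \<in> matrix_alg"
  unfolding matrix_alg_def by (rule cstar_gen_mult)

lemma shift_power_in_matrix_alg: "u ^ k \<in> matrix_alg" and star_shift_power_in_matrix_alg: "st u ^ k \<in> matrix_alg"
proof -
  have "u \<in> matrix_alg"
    unfolding u_def matrix_alg_def using n_pos
    by (intro cstar_gen_add cstar_gen_sum unit_in_matrix_alg[unfolded matrix_alg_def]) auto
  then show "u ^ k \<in> matrix_alg" "st u ^ k \<in> matrix_alg"
    unfolding matrix_alg_def by (auto intro: cstar_gen_power cstar_gen_star)
qed

lemma cstar_gen_in_matrix_alg_commutant: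
  assumes "cnj z * z = 1" and "S \<subseteq> matrix_alg \<inter> commutant (clock z)"
  shows "cstar_gen sc st S \<subseteq> matrix_alg \<inter> commutant (clock z)"
  using assms(2) unfolding matrix_alg_def
  by (intro cstar_gen_least cstar_closed_Int cstar_closed_cstar_gen cstar_closed_commutant unitary_clock assms(1))

lemma trace_alternating_word:
  assumes "ys \<noteq> []"
    and "\<forall>s<length ys. ys ! s \<in> (if even s then proj_alg else matrix_alg) \<and> \<tau> (ys ! s) = 0"
  shows "\<tau> (prod_list ys) = 0"
proof -
  have "\<tau> (prod_list (map (\<lambda>s. ys ! s) [0..<length ys])) = 0"
    by (intro free_pe[unfolded free_family_def, rule_format, of "length ys" "\<lambda>s. if even s then 0 else 1"]
        conjI allI impI)
      (use assms in \<open>auto simp: proj_alg_def matrix_alg_def Suc_le_eq\<close>)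
  then show ?thesis by (simp add: map_nth)
qed

inductive pm_word :: "'a list \<Rightarrow> bool" where
  single: "x \<in> proj_alg \<Longrightarrow> \<tau> x = 0 \<Longrightarrow> pm_word [x]"
| snoc: "pm_word xs \<Longrightarrow> y \<in> matrix_alg \<Longrightarrow> \<tau> y = 0 \<Longrightarrow> x \<in> proj_alg \<Longrightarrow> \<tau> x = 0 \<Longrightarrow>
    pm_word (xs @ [y, x])"

lemma pm_word_nth:
  assumes "pm_word xs"
  shows "odd (length xs)"
    and "\<forall>s<length xs. xs ! s \<in> (if even s then proj_alg else matrix_alg) \<and> \<tau> (xs ! s) = 0"
  using assms
proof (induction rule: pm_word.induct)
  case (snoc xs y x)
  { case 1 show ?case using snoc by simp }
  { case 2 show ?case
    proof (intro allI impI)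
      fix s assume "s < length (xs @ [y, x])"
      then consider "s < length xs" | "s = length xs" | "s = Suc (length xs)" by fastforce
      then show "(xs @ [y, x]) ! s \<in> (if even s then proj_alg else matrix_alg) \<and> \<tau> ((xs @ [y, x]) ! s) = 0"
        by cases (use snoc in \<open>auto simp: nth_append\<close>)
    qed }
qed simp_all

text \<open>Centring Y turns xs @ [Y] into an alternating word.\<close>

lemma trace_pm_word_mult:
  assumes xs: "pm_word xs" and Y: "Y \<in> matrix_alg"
  shows "\<tau> (prod_list xs * Y) = 0"
proof -
  define Y0 where "Y0 = Y + sc (- \<tau> Y) 1"
  have Y0: "Y0 \<in> matrix_alg" "\<tau> Y0 = 0"
    using Y unfolding Y0_def matrix_alg_def by (auto intro: cstar_gen_add cstar_gen_scale cstar_gen_one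
        simp: trace_add trace_scale trace_one)
  have "\<tau> (prod_list (xs @ [Y0])) = 0"
  proof (rule trace_alternating_word)
    show "\<forall>s<length (xs @ [Y0]). (xs @ [Y0]) ! s \<in> (if even s then proj_alg else matrix_alg) \<and>
        \<tau> ((xs @ [Y0]) ! s) = 0"
      using pm_word_nth[OF xs] Y0 by (auto simp: nth_append less_Suc_eq)
  qed simp
  moreover have "\<tau> (prod_list xs) = 0"
    using pm_word_nth[OF xs] by (intro trace_alternating_word) auto
  moreover have "prod_list xs * Y0 = prod_list xs * Y + sc (- \<tau> Y) (prod_list xs)"
    unfolding Y0_def by (simp add: distrib_left scale_mult_right)
  ultimately show ?thesis by (simp add: trace_add trace_scale)
qed

lemma trace_pm_word_rotate:
  assumes "pm_word xs" "Y \<in> matrix_alg" "T \<in> matrix_alg"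
  shows "\<tau> (Y * prod_list xs * T) = 0"
proof -
  have "\<tau> (Y * prod_list xs * T) = \<tau> (prod_list xs * (T * Y))"
    by (simp add: trace_commute[of Y] mult.assoc)
  then show ?thesis using assms by (simp add: trace_pm_word_mult matrix_alg_mult)
qed

lemma conj_alg_element:
  assumes "x \<in> cstar_gen sc st ((\<lambda>j. u ^ k * p j * st u ^ k) ` {1..m})"
  shows "\<exists>y\<in>proj_alg. \<tau> y = \<tau> x \<and> x = u ^ k * y * st u ^ k"
proof -
  let ?v = "u ^ k"
  have v: "unitary ?v" by (rule unitary_power[OF unitary_shift])
  then have inv: "?v * st ?v = 1" "st ?v * ?v = 1" by (simp_all add: unitary_def)
  have "(\<lambda>j. u ^ k * p j * st u ^ k) ` {1..m} = (\<lambda>s. ?v * s * st ?v) ` (p ` {1..m})"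
    by (auto simp: star_power)
  then have "st ?v * x * ?v \<in> proj_alg"
    using cstar_gen_conj[OF v] assms unfolding proj_alg_def by metis
  moreover have "\<tau> (st ?v * x * ?v) = \<tau> x" by (rule trace_conj_unitary[OF v])
  moreover have "x = (?v * st ?v) * x * (?v * st ?v)" by (simp add: inv)
  then have "x = ?v * (st ?v * x * ?v) * st ?v" by (simp add: mult.assoc)
  ultimately show ?thesis by (auto simp: star_power)
qed

end

locale shifted_letters = free_pair sc st n e \<tau> u m p
  for sc :: "complex \<Rightarrow> 'a::{real_normed_algebra_1,banach} \<Rightarrow> 'a" and st n e \<tau> u m p +
  fixes l :: nat and Dl :: "'a set"
  assumes l_dvd: "l dvd n"
    and Dl_sub: "Dl \<subseteq> matrix_alg \<inter> commutant (clock (cis (2 * pi / l)))"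
begin

definition letter_alg :: "nat \<Rightarrow> 'a set" where
  "letter_alg k = (if k < l then cstar_gen sc st ((\<lambda>j. u ^ k * p j * st u ^ k) ` {1..m}) else Dl)"

lemma letter_alg_conj:
  assumes "k < l" "x \<in> letter_alg k" "\<tau> x = 0"
  shows "\<exists>y\<in>proj_alg. \<tau> y = 0 \<and> x = u ^ k * y * st u ^ k"
  using conj_alg_element[of x k] assms by (simp add: letter_alg_def)

lemma trace_conj_shift_letter:
  assumes "d \<in> Dl" "k < l" "k' < l" "k \<noteq> k' \<or> \<tau> d = 0"
  shows "\<tau> (st u ^ k * d * u ^ k') = 0"
  using Dl_sub assms by (intro trace_conj_shift_eq_0[OF l_dvd]) auto

text \<open>Normal forms of the prefixes of an alternating word in the algebras letter_alg k, ending
  with a letter of index k < l or with a letter d of Dl; z = d is the one-letter word.\<close>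

definition ends_with_P :: "'a \<Rightarrow> nat \<Rightarrow> bool" where
  "ends_with_P z k \<longleftrightarrow> (\<exists>Y\<in>matrix_alg. \<exists>xs. pm_word xs \<and> z = Y * prod_list xs * st u ^ k)"

definition ends_with_D :: "'a \<Rightarrow> 'a \<Rightarrow> bool" where
  "ends_with_D z d \<longleftrightarrow> z = d \<or>
     (\<exists>Y\<in>matrix_alg. \<exists>xs k. k < l \<and> pm_word xs \<and> z = Y * prod_list xs * st u ^ k * d)"

lemma ends_with_P_first: "x \<in> proj_alg \<Longrightarrow> \<tau> x = 0 \<Longrightarrow> ends_with_P (u ^ k * x * st u ^ k) k"
  unfolding ends_with_P_def
  by (intro bexI[of _ "u ^ k"] exI[of _ "[x]"]) (auto intro: pm_word.single shift_power_in_matrix_alg)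

lemma ends_with_P_snoc_P:
  assumes z: "ends_with_P z k" and k: "k < l" "k' < l" "k \<noteq> k'" and x: "x \<in> proj_alg" "\<tau> x = 0"
  shows "ends_with_P (z * (u ^ k' * x * st u ^ k')) k'"
proof -
  obtain Y xs where Y: "Y \<in> matrix_alg" "pm_word xs" "z = Y * prod_list xs * st u ^ k"
    using z unfolding ends_with_P_def by blast
  let ?y = "st u ^ k * u ^ k'"
  have "?y \<in> matrix_alg" by (intro matrix_alg_mult shift_power_in_matrix_alg star_shift_power_in_matrix_alg)
  moreover have "\<tau> ?y = 0"
    using trace_conj_shift_eq_0[OF l_dvd _ k(1,2), of 1] k(3) by (simp add: commutant_def)
  ultimately have "pm_word (xs @ [?y, x])" using Y(2) x by (blast intro: pm_word.snoc)
  moreover have "z * (u ^ k' * x * st u ^ k') = Y * prod_list (xs @ [?y, x]) * st u ^ k'"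
    unfolding Y(3) by (simp add: mult.assoc)
  ultimately show ?thesis using Y(1) unfolding ends_with_P_def by blast
qed

lemma ends_with_D_snoc_P:
  assumes z: "ends_with_D z d" and d: "d \<in> Dl" "\<tau> d = 0"
    and k': "k' < l" and x: "x \<in> proj_alg" "\<tau> x = 0"
  shows "ends_with_P (z * (u ^ k' * x * st u ^ k')) k'"
  using z unfolding ends_with_D_def
proof (elim disjE bexE exE conjE)
  assume "z = d"
  moreover have "d * u ^ k' \<in> matrix_alg"
    using d Dl_sub by (auto intro: matrix_alg_mult shift_power_in_matrix_alg)
  ultimately show ?thesis
    unfolding ends_with_P_def using x
    by (intro bexI[of _ "d * u ^ k'"] exI[of _ "[x]"]) (auto intro: pm_word.single simp: mult.assoc)
next
  fix Y xs k assume Y: "Y \<in> matrix_alg" "k < l" "pm_word xs" "z = Y * prod_list xs * st u ^ k * d"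
  let ?y = "st u ^ k * d * u ^ k'"
  have "?y \<in> matrix_alg"
    using d Dl_sub by (auto intro!: matrix_alg_mult shift_power_in_matrix_alg star_shift_power_in_matrix_alg)
  moreover have "\<tau> ?y = 0" using d Y(2) k' by (intro trace_conj_shift_letter) auto
  ultimately have "pm_word (xs @ [?y, x])" using Y(3) x by (blast intro: pm_word.snoc)
  moreover have "z * (u ^ k' * x * st u ^ k') = Y * prod_list (xs @ [?y, x]) * st u ^ k'"
    unfolding Y(4) by (simp add: mult.assoc)
  ultimately show ?thesis using Y(1) unfolding ends_with_P_def by blast
qed

lemma ends_with_P_snoc_D: "ends_with_P z k \<Longrightarrow> k < l \<Longrightarrow> ends_with_D (z * d) d"
  unfolding ends_with_P_def ends_with_D_def by auto

lemma trace_ends_with_P: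
  assumes "ends_with_P z k"
  shows "\<tau> (z * u ^ r) = 0"
proof -
  obtain Y xs where "Y \<in> matrix_alg" "pm_word xs" "z = Y * prod_list xs * st u ^ k"
    using assms(1) unfolding ends_with_P_def by blast
  then show ?thesis
    using trace_pm_word_rotate[of xs Y "st u ^ k * u ^ r"]
    by (simp add: mult.assoc matrix_alg_mult shift_power_in_matrix_alg star_shift_power_in_matrix_alg)
qed

lemma trace_ends_with_D:
  assumes z: "ends_with_D z d" and d: "d \<in> Dl" "\<tau> d = 0" and r: "r < l"
  shows "\<tau> (z * u ^ r) = 0"
  using z unfolding ends_with_D_def
proof (elim disjE bexE exE conjE)
  assume "z = d"
  then show ?thesis using trace_conj_shift_letter[OF d(1) _ r, of 0] d r by simp
next
  fix Y xs k assume Y: "Y \<in> matrix_alg" "k < l" "pm_word xs" "z = Y * prod_list xs * st u ^ k * d"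
  have "st u ^ k * d * u ^ r \<in> matrix_alg"
    using d Dl_sub by (auto intro!: matrix_alg_mult shift_power_in_matrix_alg star_shift_power_in_matrix_alg)
  then show ?thesis
    using trace_pm_word_rotate[OF Y(3,1)] unfolding Y(4) by (simp add: mult.assoc)
qed

definition prefix_normal_form :: "'a \<Rightarrow> nat \<Rightarrow> 'a \<Rightarrow> bool" where
  "prefix_normal_form z k d \<longleftrightarrow> (if k < l then ends_with_P z k else ends_with_D z d)"

lemma prefix_normal_form_letter:
  assumes "d \<in> letter_alg k" "\<tau> d = 0"
  shows "prefix_normal_form d k d"
proof (cases "k < l")
  case True
  then obtain x where "x \<in> proj_alg" "\<tau> x = 0" "d = u ^ k * x * st u ^ k"
    using letter_alg_conj assms by blast
  then show ?thesis using True by (simp add: prefix_normal_form_def ends_with_P_first)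
qed (simp add: prefix_normal_form_def ends_with_D_def)

lemma prefix_normal_form_snoc:
  assumes z: "prefix_normal_form z k d" and d: "d \<in> letter_alg k" "\<tau> d = 0"
    and d': "d' \<in> letter_alg k'" "\<tau> d' = 0" and k: "k \<le> l" "k' \<le> l" "k \<noteq> k'"
  shows "prefix_normal_form (z * d') k' d'"
proof (cases "k' < l")
  case True
  then obtain x where x: "x \<in> proj_alg" "\<tau> x = 0" "d' = u ^ k' * x * st u ^ k'"
    using letter_alg_conj d' by blast
  have "ends_with_P (z * d') k'"
  proof (cases "k < l")
    case True
    then have "ends_with_P z k" using z by (simp add: prefix_normal_form_def)
    then show ?thesis unfolding x(3) using True \<open>k' < l\<close> k(3) x(1,2) by (rule ends_with_P_snoc_P)
  next
    case False
    then have "ends_with_D z d" "d \<in> Dl"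
      using z d by (simp_all add: prefix_normal_form_def letter_alg_def)
    then show ?thesis unfolding x(3) using d(2) \<open>k' < l\<close> x(1,2) by (rule ends_with_D_snoc_P)
  qed
  then show ?thesis using True by (simp add: prefix_normal_form_def)
next
  case False
  then have "k < l" using k by simp
  then have "ends_with_P z k" using z by (simp add: prefix_normal_form_def)
  then have "ends_with_D (z * d') d'" using \<open>k < l\<close> by (rule ends_with_P_snoc_D)
  then show ?thesis using False by (simp add: prefix_normal_form_def)
qed

lemma trace_prefix_normal_form:
  assumes "prefix_normal_form z k d" "d \<in> letter_alg k" "\<tau> d = 0" "r < l"
  shows "\<tau> (z * u ^ r) = 0"
  using assms trace_ends_with_P trace_ends_with_D
  by (auto simp: prefix_normal_form_def letter_alg_def split: if_splits)

lemma trace_Lambda0_shift_power: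
  assumes "\<omega> \<in> Lambda0 \<tau> {0..l} letter_alg" and "r < l"
  shows "\<tau> (\<omega> * u ^ r) = 0"
proof -
  obtain len idx d where \<omega>: "\<omega> = prod_list (map d [0..<len])" and "1 \<le> len"
    and letters: "\<forall>s<len. idx s \<in> {0..l} \<and> d s \<in> letter_alg (idx s) \<and> \<tau> (d s) = 0"
    and alternating: "\<forall>s. s + 1 < len \<longrightarrow> idx s \<noteq> idx (s + 1)"
    using assms(1) unfolding Lambda0_def by blast
  have prefix: "prefix_normal_form (prod_list (map d [0..<Suc t])) (idx t) (d t)" if "t < len" for t
    using that
  proof (induction t)
    case 0
    then show ?case using letters by (simp add: prefix_normal_form_letter)
  next
    case (Suc t)
    then have "prefix_normal_form (prod_list (map d [0..<Suc t]) * d (Suc t)) (idx (Suc t)) (d (Suc t))"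
      using letters alternating by (intro prefix_normal_form_snoc) auto
    then show ?case by (simp add: mult.assoc)
  qed
  obtain t where t: "len = Suc t" using \<open>1 \<le> len\<close> by (cases len) auto
  show ?thesis
    using trace_prefix_normal_form[OF prefix[of t]] letters assms(2) by (simp add: \<omega> t)
qed

end

context free_pair
begin

lemma free_shifted_family:
  assumes l: "l dvd n" and S: "S \<subseteq> matrix_alg \<inter> commutant (clock (cis (2 * pi / l)))"
  shows "let D = (\<lambda>k. if k < l then cstar_gen sc st ((\<lambda>j. u ^ k * p j * (st u) ^ k) ` {1..m})
                   else cstar_gen sc st S)
         in free_family \<tau> {0..l} D \<and> (\<forall>\<omega>\<in>Lambda0 \<tau> {0..l} D. \<forall>r<l. \<tau> (\<omega> * u ^ r) = 0)"
proof -
  interpret shifted_letters sc st n e \<tau> u m p l "cstar_gen sc st S"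
    using l cstar_gen_in_matrix_alg_commutant[OF root_of_unity_clock(2)[OF l] S]
    by unfold_locales
  have "\<forall>\<omega>\<in>Lambda0 \<tau> {0..l} letter_alg. \<forall>r<l. \<tau> (\<omega> * u ^ r) = 0"
    using trace_Lambda0_shift_power by blast
  moreover have "0 < l" by (rule root_of_unity_clock(1)[OF l])
  ultimately show ?thesis
    unfolding Let_def free_family_iff_Lambda0 letter_alg_def[abs_def] by force
qed

end

theorem lemma3p1:
  fixes sc :: "complex \<Rightarrow> 'a::{real_normed_algebra_1,banach} \<Rightarrow> 'a"
    and st :: "'a \<Rightarrow> 'a"
    and \<tau> :: "'a \<Rightarrow> complex"
    and n m :: nat
    and \<alpha> :: "nat \<Rightarrow> real"
    and p :: "nat \<Rightarrow> 'a"
    and e :: "nat \<Rightarrow> nat \<Rightarrow> 'a"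
    and u :: 'a
  assumes cstar: "cstar_algebra sc st"
    and state: "faithful_tracial_state sc st \<tau>"
    and n2: "n \<ge> 2" and m1: "m \<ge> 1"
    and alpha_pos: "\<forall>j\<in>{1..m}. \<alpha> j > 0"
    and alpha_mono: "\<forall>j k. 1 \<le> j \<longrightarrow> j \<le> k \<longrightarrow> k \<le> m \<longrightarrow> \<alpha> j \<le> \<alpha> k"
    and alpha_sum: "(\<Sum>j=1..m. \<alpha> j) = 1"
    and p_proj: "\<forall>j\<in>{1..m}. st (p j) = p j \<and> p j * p j = p j"
    and p_orth: "\<forall>j\<in>{1..m}. \<forall>k\<in>{1..m}. j \<noteq> k \<longrightarrow> p j * p k = 0"
    and p_sum: "(\<Sum>j=1..m. p j) = 1"
    and p_trace: "\<forall>j\<in>{1..m}. \<tau> (p j) = complex_of_real (\<alpha> j)"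
    and e_mult: "\<forall>i\<in>{1..n}. \<forall>j\<in>{1..n}. \<forall>k\<in>{1..n}. \<forall>l\<in>{1..n}.
                   e i j * e k l = (if j = k then e i l else 0)"
    and e_star: "\<forall>i\<in>{1..n}. \<forall>j\<in>{1..n}. st (e i j) = e j i"
    and e_sum: "(\<Sum>i=1..n. e i i) = 1"
    and e_trace: "\<forall>i\<in>{1..n}. \<forall>j\<in>{1..n}.
                   \<tau> (e i j) = (if i = j then 1 / of_nat n else 0)"
    and free_pe: "free_family \<tau> {0::nat, 1}
                   (\<lambda>i. if i = 0 then cstar_gen sc st (p ` {1..m})
                        else cstar_gen sc st {e i j | i j. i \<in> {1..n} \<and> j \<in> {1..n}})"
    and u_def: "u = (\<Sum>i=1..n-1. e i (i+1)) + e n 1"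
  shows
   "(let D = (\<lambda>k. if k < n then cstar_gen sc st ((\<lambda>j. u ^ k * p j * (st u) ^ k) ` {1..m})
                  else cstar_gen sc st ((\<lambda>i. e i i) ` {1..n}))
     in free_family \<tau> {0..n} D \<and>
        (\<forall>\<omega>\<in>Lambda0 \<tau> {0..n} D. \<forall>r<n. \<tau> (\<omega> * u ^ r) = 0)) \<and>
    (\<forall>l::nat. l dvd n \<and> 1 < l \<and> l < n \<longrightarrow>
      (let D = (\<lambda>k. if k < l then cstar_gen sc st ((\<lambda>j. u ^ k * p j * (st u) ^ k) ` {1..m})
                   else cstar_gen sc st ((\<lambda>i. e i i) ` {1..n} \<union>
                                          (\<lambda>t. u ^ (l * t)) ` {1..n div l - 1}))
       in free_family \<tau> {0..l} D \<and>
          (\<forall>\<omega>\<in>Lambda0 \<tau> {0..l} D. \<forall>r<l. \<tau> (\<omega> * u ^ r) = 0)))"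
proof -
  interpret free_pair sc st n e \<tau> u m p
    using assms by unfold_locales auto
  have diag_units: "(\<lambda>i. e i i) ` {1..n} \<subseteq> matrix_alg \<inter> commutant (clock z)" for z
    by (auto intro: unit_in_matrix_alg diag_unit_in_commutant)
  have shift_powers: "(\<lambda>t. u ^ (l * t)) ` {1..n div l - 1} \<subseteq> matrix_alg \<inter> commutant (clock (cis (2 * pi / l)))"
    if "l dvd n" for l
    using that by (auto intro: shift_power_in_matrix_alg shift_power_in_commutant)
  show ?thesis
    using free_shifted_family[OF dvd_refl diag_units]
      free_shifted_family[OF _ Un_least[OF diag_units shift_powers]] by blast
qed

end
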